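(* Under the hypotheses of the following setting, suppose additionally that $a_i=0$ and $v(\mathcal{P}^R,\mathcal{P}^R)=v(\mathcal{P},\mathcal{P})$. Then $\phi^R(i)\le \phi(i)/2$. Setting: $\mathcal{P}=\{1,\dots,M\}$, $i\in\mathcal{P}$, $i'\notin\mathcal{P}$, $\mathcal{P}^R=\mathcal{P}\cup\{i'\}$; $v(\cdot,\mathcal{P})\colon2^{\mathcal{P}}\to\mathbb{R}$, $v(\cdot,\mathcal{P}^R)\colon2^{\mathcal{P}^R}\to\mathbb{R}$ with $v(\mathcal{P},\mathcal{P})>0$, $v(\mathcal{P}^R,\mathcal{P}^R)>0$; (1) $v(S,\mathcal{P})=v(S,\mathcal{P}^R)$ for all $S\subseteq\mathcal{P}$; (2) $v(S\cup\{i\},\mathcal{P}^R)-v(S,\mathcal{P}^R)\le a_i$ for every $S\subseteq\mathcal{P}^R\setminus\{i\}$ with $i'\in S$; (3) $v(R\cup\{i\},\mathcal{P})-v(R,\mathcal{P})\le v(Q\cup\{i\},\mathcal{P})-v(Q,\mathcal{P})$ for all $R\subseteq Q\subseteq\mathcal{P}\setminus\{i\}$.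
   Context: Normalized Shapley values: $\phi(i)=\frac{1}{v(\mathcal{P},\mathcal{P})}\sum_{S\subseteq\mathcal{P}\setminus\{i\}}\frac{|S|!\,(M-|S|-1)!}{M!}\big(v(S\cup\{i\},\mathcal{P})-v(S,\mathcal{P})\big)$ and $\phi^R(i)=\frac{1}{v(\mathcal{P}^R,\mathcal{P}^R)}\sum_{S\subseteq\mathcal{P}^R\setminus\{i\}}\frac{|S|!\,(M-|S|)!}{(M+1)!}\big(v(S\cup\{i\},\mathcal{P}^R)-v(S,\mathcal{P}^R)\big)$. *)

theory Defs
  imports Main "HOL-Library.Extended_Real" Complex_Main
begin

definition shapley_phi :: "nat \<Rightarrow> (nat set \<Rightarrow> real) \<Rightarrow> nat \<Rightarrow> real" where
  "shapley_phi M v i = (1 / v {1..M}) *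
     (\<Sum>S\<in>Pow ({1..M} - {i}).
        (fact (card S) * fact (M - card S - 1) / fact M) * (v (insert i S) - v S))"

definition shapley_phiR :: "nat \<Rightarrow> nat \<Rightarrow> (nat set \<Rightarrow> real) \<Rightarrow> nat \<Rightarrow> real" where
  "shapley_phiR M i' v i = (1 / v (insert i' {1..M})) *
     (\<Sum>S\<in>Pow (insert i' {1..M} - {i}).
        (fact (card S) * fact (M - card S) / fact (M + 1)) * (v (insert i S) - v S))"

end

theory Submission
  imports Defs
begin

text \<open>Write \<open>N = P - {i}\<close>, \<open>n = |N|\<close> and \<open>d T = v (T \<union> {i}) - v T\<close>.  Supermodularity makes \<open>d\<close>
  monotone, so by double counting the mean \<open>A k\<close> of \<open>d\<close> over the \<open>k\<close>-subsets of \<open>N\<close> is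
  nondecreasing in \<open>k\<close>.  Grouping by cardinality, the unnormalised Shapley value is
  \<open>\<Sum>k A k / (n+1)\<close>.  In the enlarged game the coalitions containing \<open>i'\<close> contribute at most
  \<open>a_i = 0\<close>, and the remaining ones give \<open>\<Sum>k (n+1-k) A k / ((n+1)(n+2))\<close>; this is half the
  former plus \<open>\<Sum>k (n-2k) A k / (2(n+1)(n+2))\<close>, which is \<open>\<le> 0\<close> by Chebyshev's sum inequality
  because \<open>A\<close> is nondecreasing.  Equal grand-coalition values make the normalisations agree.\<close>

definition layer_mean :: "(nat set \<Rightarrow> real) \<Rightarrow> nat set \<Rightarrow> nat \<Rightarrow> real" where
  "layer_mean d N k = (\<Sum>T | T \<subseteq> N \<and> card T = k. d T) / real (card N choose k)"

lemma finite_subsets_card: "finite N \<Longrightarrow> finite {T. T \<subseteq> N \<and> card T = k}"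
  by (auto intro: finite_subset[of _ "Pow N"])

lemma layer_sum_le_next_layer:
  fixes d :: "nat set \<Rightarrow> real"
  assumes fin: "finite N"
    and mono: "\<And>T j. T \<subseteq> N \<Longrightarrow> j \<in> N - T \<Longrightarrow> d T \<le> d (insert j T)"
  shows "real (card N - k) * (\<Sum>T | T \<subseteq> N \<and> card T = k. d T)
       \<le> real (k + 1) * (\<Sum>T | T \<subseteq> N \<and> card T = k + 1. d T)"
proof -
  let ?F = "\<lambda>k. {T. T \<subseteq> N \<and> card T = k}"
  have card_compl: "card (N - T) = card N - k" if "T \<in> ?F k" for T
    using that fin by (auto simp: card_Diff_subset finite_subset)
  have "real (card N - k) * (\<Sum>T\<in>?F k. d T) = (\<Sum>T\<in>?F k. \<Sum>j\<in>N - T. d T)"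
    by (simp add: sum_distrib_left card_compl)
  also have "\<dots> \<le> (\<Sum>T\<in>?F k. \<Sum>j\<in>N - T. d (insert j T))"
    by (intro sum_mono) (auto intro: mono)
  also have "\<dots> = (\<Sum>(T, j)\<in>Sigma (?F k) (\<lambda>T. N - T). d (insert j T))"
    by (simp add: sum.Sigma fin finite_subsets_card)
  also have "\<dots> = (\<Sum>(U, j)\<in>Sigma (?F (k + 1)) (\<lambda>U. U). d U)"
    by (rule sum.reindex_bij_witness[where i="\<lambda>(U, j). (U - {j}, j)" and j="\<lambda>(T, j). (insert j T, j)"])
      (use fin in \<open>auto simp: finite_subset card_insert_if card_Diff_singleton\<close>)
  also have "\<dots> = (\<Sum>U\<in>?F (k + 1). \<Sum>j\<in>U. d U)"
    by (subst sum.Sigma) (auto simp: fin finite_subsets_card finite_subset)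
  also have "\<dots> = real (k + 1) * (\<Sum>T\<in>?F (k + 1). d T)"
    by (simp add: sum_distrib_left)
  finally show ?thesis .
qed

lemma layer_mean_le_Suc:
  fixes d :: "nat set \<Rightarrow> real"
  assumes fin: "finite N" and k: "k < card N"
    and mono: "\<And>T j. T \<subseteq> N \<Longrightarrow> j \<in> N - T \<Longrightarrow> d T \<le> d (insert j T)"
  shows "layer_mean d N k \<le> layer_mean d N (k + 1)"
proof -
  let ?n = "card N"
  let ?B = "\<lambda>k. \<Sum>T | T \<subseteq> N \<and> card T = k. d T"
  have pos: "real (?n choose k) > 0" "real (?n choose (k + 1)) > 0"
    using k by auto
  have "(k + 1) * (?n choose (k + 1)) = (?n - k) * (?n choose k)"
    using binomial_absorption[of k ?n] binomial_absorb_comp[of ?n k] by simp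
  then have absorb: "real (k + 1) * real (?n choose (k + 1)) = real (?n - k) * real (?n choose k)"
    by (metis of_nat_mult)
  have "real (k + 1) * (?B k * real (?n choose (k + 1)))
      = (real (k + 1) * real (?n choose (k + 1))) * ?B k"
    by (simp only: mult_ac)
  also have "\<dots> = real (?n - k) * ?B k * real (?n choose k)"
    unfolding absorb by (simp only: mult_ac)
  also have "\<dots> \<le> real (k + 1) * ?B (k + 1) * real (?n choose k)"
    by (rule mult_right_mono[OF layer_sum_le_next_layer[OF fin mono] of_nat_0_le_iff])
  finally have "real (k + 1) * (?B k * real (?n choose (k + 1)))
      \<le> real (k + 1) * (?B (k + 1) * real (?n choose k))"
    by (simp only: mult.assoc)
  then have "?B k * real (?n choose (k + 1)) \<le> ?B (k + 1) * real (?n choose k)"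
    by (rule mult_left_le_imp_le) simp
  then show ?thesis
    unfolding layer_mean_def using pos by (simp add: divide_simps)
qed

lemma sum_Pow_by_layer_mean:
  fixes w :: "nat \<Rightarrow> real" and d :: "nat set \<Rightarrow> real"
  assumes fin: "finite N"
  shows "(\<Sum>T\<in>Pow N. w (card T) * d T)
       = (\<Sum>k=0..card N. w k * real (card N choose k) * layer_mean d N k)"
proof -
  have "(\<Sum>T\<in>Pow N. w (card T) * d T)
      = (\<Sum>k=0..card N. \<Sum>T | T \<in> Pow N \<and> card T = k. w (card T) * d T)"
    by (rule sum.group[symmetric]) (auto simp: fin card_mono)
  also have "\<dots> = (\<Sum>k=0..card N. w k * (\<Sum>T | T \<subseteq> N \<and> card T = k. d T))"
    by (auto simp: sum_distrib_left intro!: sum.cong)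
  finally show ?thesis
    unfolding layer_mean_def by simp
qed

lemma sum_centered_weights_nonpos:
  fixes A :: "nat \<Rightarrow> real"
  assumes mono: "\<And>k. k < n \<Longrightarrow> A k \<le> A (k + 1)"
  shows "(\<Sum>k=0..n. (real n - 2 * real k) * A k) \<le> 0"
proof -
  have A_mono: "A k \<le> A l" if "k \<le> l" "l \<le> n" for k l
    by (rule lift_Suc_mono_le_ivl[of "{..<n}"]) (use that mono in auto)
  let ?S = "\<Sum>k=0..n. (real n - 2 * real k) * A k"
  have reflected: "?S = (\<Sum>k=0..n. (real n - 2 * real (n - k)) * A (n - k))"
    using sum.atLeastAtMost_rev[of "\<lambda>k. (real n - 2 * real k) * A k" 0 n] by simp
  \<comment> \<open>pairing \<open>k\<close> with \<open>n - k\<close>: both factors change sign at \<open>k = n/2\<close>\<close>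
  have "2 * ?S = (\<Sum>k=0..n. (real n - 2 * real k) * (A k - A (n - k)))"
    by (subst mult_2, subst (2) reflected, subst sum.distrib[symmetric])
      (rule sum.cong, auto simp: algebra_simps of_nat_diff)
  also have "\<dots> \<le> 0"
  proof (rule sum_nonpos)
    fix k assume "k \<in> {0..n}"
    then show "(real n - 2 * real k) * (A k - A (n - k)) \<le> 0"
      using A_mono[of k "n - k"] A_mono[of "n - k" k]
      by (cases "2 * k \<le> n") (auto intro: mult_nonneg_nonpos mult_nonpos_nonneg)
  qed
  finally show ?thesis by simp
qed

lemma shapley_weight_times_binomial:
  assumes "k \<le> n"
  shows "fact k * fact (n - k) / fact (n + 1) * real (n choose k) = 1 / real (n + 1)"
proof -
  have "fact k * fact (n - k) / fact (n + 1) * real (n choose k)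
      = fact k * fact (n - k) * real (n choose k) / fact (Suc n)"
    by simp
  also have "\<dots> = fact n / fact (Suc n)"
    using binomial_fact_lemma[OF assms] by (metis of_nat_fact of_nat_mult)
  also have "\<dots> = 1 / real (n + 1)"
    by (simp add: fact_Suc)
  finally show ?thesis .
qed

lemma shapley_weight_extended_times_binomial:
  assumes "k \<le> n"
  shows "fact k * fact (n + 1 - k) / fact (n + 2) * real (n choose k)
       = real (n + 1 - k) / (real (n + 1) * real (n + 2))"
proof -
  have "fact (n + 1 - k) = real (n + 1 - k) * fact (n - k)"
    using assms by (simp add: Suc_diff_le)
  moreover have "fact (n + 2) = real (n + 2) * fact (n + 1)"
    by (simp add: numeral_2_eq_2)
  moreover have "a * (p * b) / (q * c) * x = p / q * (a * b / c * x)" for a b c p q x :: real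
    by (simp add: mult_ac)
  ultimately have "fact k * fact (n + 1 - k) / fact (n + 2) * real (n choose k)
      = real (n + 1 - k) / real (n + 2) * (fact k * fact (n - k) / fact (n + 1) * real (n choose k))"
    by (simp only:)
  then show ?thesis
    unfolding shapley_weight_times_binomial[OF assms] by simp
qed

lemma extended_weight_split:
  fixes n k :: nat
  assumes "k \<le> n + 1"
  shows "real (n + 1 - k) / (real (n + 1) * real (n + 2))
       = 1 / real (n + 1) / 2 + (real n - 2 * real k) / (2 * real (n + 1) * real (n + 2))"
  using assms by (simp add: of_nat_diff divide_simps) (simp add: algebra_simps)

lemma sum_Pow_insert:
  assumes "finite A" "a \<notin> A"
  shows "(\<Sum>S\<in>Pow (insert a A). f S) = (\<Sum>S\<in>Pow A. f S) + (\<Sum>S\<in>Pow A. f (insert a S))"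
proof -
  have "inj_on (insert a) (Pow A)"
    using assms(2) by (auto intro!: inj_onI)
  then show ?thesis
    using assms unfolding Pow_insert
    by (subst sum.union_disjoint) (auto simp: sum.reindex)
qed

lemma sum_Pow_shapley_weights_Suc_le_half:
  fixes d :: "nat set \<Rightarrow> real"
  assumes fin: "finite N"
    and mono: "\<And>T j. T \<subseteq> N \<Longrightarrow> j \<in> N - T \<Longrightarrow> d T \<le> d (insert j T)"
  shows "(\<Sum>T\<in>Pow N. fact (card T) * fact (card N + 1 - card T) / fact (card N + 2) * d T)
       \<le> (\<Sum>T\<in>Pow N. fact (card T) * fact (card N - card T) / fact (card N + 1) * d T) / 2"
proof -
  let ?n = "card N"
  let ?A = "layer_mean d N"
  have centered: "(\<Sum>k=0..?n. (real ?n - 2 * real k) * ?A k) \<le> 0"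
    by (rule sum_centered_weights_nonpos) (use layer_mean_le_Suc[OF fin _ mono] in auto)
  have phi_layers: "(\<Sum>T\<in>Pow N. fact (card T) * fact (?n - card T) / fact (?n + 1) * d T)
      = (\<Sum>k=0..?n. 1 / real (?n + 1) * ?A k)"
    unfolding sum_Pow_by_layer_mean[OF fin, of "\<lambda>k. fact k * fact (?n - k) / fact (?n + 1)"]
    by (intro sum.cong refl) (auto simp only: atLeastAtMost_iff shapley_weight_times_binomial)
  have "(\<Sum>T\<in>Pow N. fact (card T) * fact (?n + 1 - card T) / fact (?n + 2) * d T)
      = (\<Sum>k=0..?n. (1 / real (?n + 1) / 2
          + (real ?n - 2 * real k) / (2 * real (?n + 1) * real (?n + 2))) * ?A k)"
    unfolding sum_Pow_by_layer_mean[OF fin, of "\<lambda>k. fact k * fact (?n + 1 - k) / fact (?n + 2)"]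
    by (intro sum.cong refl)
      (auto simp only: atLeastAtMost_iff trans_le_add1 shapley_weight_extended_times_binomial
        extended_weight_split)
  also have "\<dots> = (\<Sum>k=0..?n. 1 / real (?n + 1) * ?A k) / 2
      + (\<Sum>k=0..?n. (real ?n - 2 * real k) * ?A k) / (2 * real (?n + 1) * real (?n + 2))"
    by (simp only: distrib_right sum.distrib sum_divide_distrib times_divide_eq_left)
  also have "\<dots> \<le> (\<Sum>k=0..?n. 1 / real (?n + 1) * ?A k) / 2"
    using centered by (simp add: divide_nonpos_pos)
  finally show ?thesis
    unfolding phi_layers .
qed

lemma shapley_sum_extended_le_half:
  fixes d dR :: "nat set \<Rightarrow> real"
  assumes fin: "finite N" and x: "x \<notin> N"
    and mono: "\<And>T j. T \<subseteq> N \<Longrightarrow> j \<in> N - T \<Longrightarrow> d T \<le> d (insert j T)"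
    and same: "\<And>S. S \<subseteq> N \<Longrightarrow> dR S = d S"
    and nonpos: "\<And>S. S \<subseteq> N \<Longrightarrow> dR (insert x S) \<le> 0"
  shows "(\<Sum>S\<in>Pow (insert x N). fact (card S) * fact (card N + 1 - card S) / fact (card N + 2) * dR S)
       \<le> (\<Sum>S\<in>Pow N. fact (card S) * fact (card N - card S) / fact (card N + 1) * d S) / 2"
proof -
  let ?w = "\<lambda>S. fact (card S) * fact (card N + 1 - card S) / fact (card N + 2) :: real"
  have "(\<Sum>S\<in>Pow N. ?w (insert x S) * dR (insert x S)) \<le> 0"
    by (intro sum_nonpos mult_nonneg_nonpos nonpos) auto
  moreover have "(\<Sum>S\<in>Pow (insert x N). ?w S * dR S)
      = (\<Sum>S\<in>Pow N. ?w S * d S) + (\<Sum>S\<in>Pow N. ?w (insert x S) * dR (insert x S))"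
    unfolding sum_Pow_insert[OF fin x] using same by simp
  ultimately have "(\<Sum>S\<in>Pow (insert x N). ?w S * dR S) \<le> (\<Sum>S\<in>Pow N. ?w S * d S)"
    by linarith
  also have "\<dots> \<le> (\<Sum>S\<in>Pow N. fact (card S) * fact (card N - card S) / fact (card N + 1) * d S) / 2"
    by (rule sum_Pow_shapley_weights_Suc_le_half[OF fin mono])
  finally show ?thesis .
qed

theorem mainTheorem2:
  fixes M i i' :: nat
    and v :: "nat set \<Rightarrow> real"   \<comment> \<open>v(\<cdot>, P)\<close>
    and vR :: "nat set \<Rightarrow> real"  \<comment> \<open>v(\<cdot>, P^R)\<close>
    and a_i :: real
  assumes hi: "i \<in> {1..M}"
    and hi': "i' \<notin> {1..M}"
    and hvpos: "v {1..M} > 0"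
    and hvRpos: "vR (insert i' {1..M}) > 0"
    and h1: "\<forall>S. S \<subseteq> {1..M} \<longrightarrow> v S = vR S"
    and h2: "\<forall>S. S \<subseteq> insert i' {1..M} - {i} \<and> i' \<in> S \<longrightarrow> vR (insert i S) - vR S \<le> a_i"
    and h3: "\<forall>R Q. R \<subseteq> Q \<and> Q \<subseteq> {1..M} - {i} \<longrightarrow>
               v (insert i R) - v R \<le> v (insert i Q) - v Q"
    and ha: "a_i = 0"
    and heq: "vR (insert i' {1..M}) = v {1..M}"
  shows "shapley_phiR M i' vR i \<le> shapley_phi M v i / 2"
proof -
  define N where "N = {1..M} - {i}"
  define d where "d T = v (insert i T) - v T" for T
  have fin: "finite N" and i'N: "i' \<notin> N" and M: "M = card N + 1"
    using hi hi' by (auto simp: N_def)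
  have P_R: "insert i' {1..M} - {i} = insert i' N"
    using hi hi' by (auto simp: N_def)
  have d_mono: "d T \<le> d (insert j T)" if "T \<subseteq> N" "j \<in> N - T" for T j
  proof -
    have "T \<subseteq> insert j T \<and> insert j T \<subseteq> {1..M} - {i}"
      using that by (auto simp: N_def)
    then show ?thesis
      unfolding d_def by (rule h3[rule_format])
  qed
  have marginal_R: "vR (insert i S) - vR S = d S" if "S \<subseteq> N" for S
  proof -
    have "S \<subseteq> {1..M}" "insert i S \<subseteq> {1..M}"
      using hi that by (auto simp: N_def)
    then show ?thesis
      using h1 by (simp add: d_def)
  qed
  have marginal_R_i': "vR (insert i (insert i' S)) - vR (insert i' S) \<le> 0" if "S \<subseteq> N" for S
  proof -
    have "insert i' S \<subseteq> insert i' {1..M} - {i} \<and> i' \<in> insert i' S"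
      using that hi hi' by (auto simp: N_def)
    then show ?thesis
      using h2[rule_format] unfolding ha by blast
  qed
  let ?wR = "\<lambda>S. fact (card S) * fact (M - card S) / fact (M + 1) :: real"
  let ?w = "\<lambda>S. fact (card S) * fact (M - card S - 1) / fact M :: real"
  have weights: "card N + 1 + 1 = card N + 2" "card N + 1 - s - 1 = card N - s" for s
    by simp_all
  have "(\<Sum>S\<in>Pow (insert i' N). ?wR S * (vR (insert i S) - vR S))
      \<le> (\<Sum>S\<in>Pow N. ?w S * (v (insert i S) - v S)) / 2"
    using shapley_sum_extended_le_half[OF fin i'N d_mono marginal_R marginal_R_i']
    unfolding M d_def[symmetric] by (simp only: weights)
  then have "1 / v {1..M} * (\<Sum>S\<in>Pow (insert i' N). ?wR S * (vR (insert i S) - vR S))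
      \<le> 1 / v {1..M} * ((\<Sum>S\<in>Pow N. ?w S * (v (insert i S) - v S)) / 2)"
    by (rule mult_left_mono) (use hvpos in simp)
  then show ?thesis
    unfolding shapley_phiR_def shapley_phi_def heq P_R N_def[symmetric] by simp
qed

end
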